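(* In the setting of the context, assume every irreducible $T$-module is thin, and let $\mathbf{C}\in T$ be the unique element satisfying $\mathbf{A}+\frac{q\mathbf{B}\mathbf{C}-q^{-1}\mathbf{C}\mathbf{B}}{q^2-q^{-2}}=\frac{(\mathbf{a}+\mathbf{a}^{-1})(\Lambda+\Lambda^{-1})+(\mathbf{b}+\mathbf{b}^{-1})(\mathbf{c}+\mathbf{c}^{-1})}{q+q^{-1}}$, $\mathbf{B}+\frac{q\mathbf{C}\mathbf{A}-q^{-1}\mathbf{A}\mathbf{C}}{q^2-q^{-2}}=\frac{(\mathbf{b}+\mathbf{b}^{-1})(\Lambda+\Lambda^{-1})+(\mathbf{c}+\mathbf{c}^{-1})(\mathbf{a}+\mathbf{a}^{-1})}{q+q^{-1}}$ and $\mathbf{C}+\frac{q\mathbf{A}\mathbf{B}-q^{-1}\mathbf{B}\mathbf{A}}{q^2-q^{-2}}=\frac{(\mathbf{c}+\mathbf{c}^{-1})(\Lambda+\Lambda^{-1})+(\mathbf{a}+\mathbf{a}^{-1})(\mathbf{b}+\mathbf{b}^{-1})}{q+q^{-1}}$. Then the standard module $V=\mathbb{C}^X$ becomes a $\Delta_q$-module on which the generators $\mathcal{A},\mathcal{B},\mathcal{C}$ act as $\mathbf{A},\mathbf{B},\mathbf{C}$ respectively.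
   Context: The universal Askey–Wilson algebra $\Delta_q$ is the associative unital $\mathbb{C}$-algebra with generators $\mathcal{A},\mathcal{B},\mathcal{C}$ and relations asserting that each of $\mathcal{A}+\frac{q\mathcal{B}\mathcal{C}-q^{-1}\mathcal{C}\mathcal{B}}{q^2-q^{-2}}$, $\mathcal{B}+\frac{q\mathcal{C}\mathcal{A}-q^{-1}\mathcal{A}\mathcal{C}}{q^2-q^{-2}}$, $\mathcal{C}+\frac{q\mathcal{A}\mathcal{B}-q^{-1}\mathcal{B}\mathcal{A}}{q^2-q^{-2}}$ is central. Fix a nonzero $q\in\mathbb{C}$ with $q^4\neq1$. Let $\Gamma$ be a finite connected distance-regular graph (undirected, no loops or multiple edges) with vertex set $X$, distance $\partial$, diameter $D\ge3$; $V=\mathbb{C}^X$. $A$ is the adjacency matrix, $E_0,\dots,E_D$ the primitive idempotents of the Bose–Mesner algebra with $E_0=|X|^{-1}J$ and $E_1,\dots,E_D$ a $Q$-polynomial ordering; $A=\sum\theta_iE_i$. Fix a vertex $x$; $E_i^*$ is the diagonal $0/1$ matrix projecting onto vertices at distance $i$ from $x$; $A^*$ is diagonal with $(y,y)$-entry $|X|(E_1)_{xy}$, $A^*=\sum\theta_i^*E_i^*$; $T$ is the algebra generated by $A,A^*$. Assume $q$-Racah type: $\theta_i=w+uq^{2i-D}+vq^{D-2i}$, $\theta_i^*=w^*+u^*q^{2i-D}+v^*q^{D-2i}$, $u,u^*,v,v^*\neq0$; fix $a,b$ with $a^2=u/v$, $b^2=u^*/v^*$; $\mathbf{A}=(A-wI)/(av)$,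 $\mathbf{B}=(A^*-w^*I)/(bv^* )$. For an irreducible $T$-module $W\subseteq V$: endpoint $\rho=\min\{i:E_i^*W\ne0\}$, dual endpoint $\tau=\min\{i:E_iW\neq0\}$, diameter $d=|\{i:E^*_iW\ne0\}|-1$; thin means $\dim E^*_iW\le1$ for all $i$. Put $a(W)=aq^{2\tau+d-D}$, $b(W)=bq^{2\rho+d-D}$. If $W$ is thin, $(\mathbf{A}|_W,\{E_{\tau+i}|_W\}_{i=0}^d,\mathbf{B}|_W,\{E^*_{\rho+i}|_W\}_{i=0}^d)$ is a Leonard system with eigenvalues $\vartheta_i=a(W)q^{2i-d}+a(W)^{-1}q^{d-2i}$ and dual eigenvalues $\vartheta^*_i=b(W)q^{2i-d}+b(W)^{-1}q^{d-2i}$; let $\kappa=0$ if $d=0$ and, for $d\ge1$, $\kappa=a(W)b(W)^{-1}q^{d-1}+a(W)^{-1}b(W)q^{1-d}+\phi_1/((q-q^{-1})(q^d-q^{-d}))$ where $\phi_1=(\vartheta^*_0-\vartheta^*_1)(\mathrm{trace}(E^*_\rho\mathbf{A}|_W)-\vartheta_d)$; $c(W)$ is a root of $\xi^2-\kappa\xi+1=0$ (defined up to reciprocal). Isomorphism of irreducible modules: linear bijection commuting with $T$; $\Psi$ = set of types; for $\psi\in\Psi$, $a(\psi),b(\psi),d(\psi),c(\psi)$ are $a(W),b(W)$, the diameter, and (a fixed choice of) $c(W)$ for $W$ of type $\psi$. $V_\psi$ = span of irreducible modules of type $\psi$, $V=\bigoplus_\psi V_\psi$, $e_\psi$ = identity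 on $V_\psi$, $0$ on other $V_\lambda$. Define $\mathbf{a}=\sum_\psi a(\psi)e_\psi$, $\mathbf{b}=\sum_\psi b(\psi)e_\psi$, $\mathbf{c}=\sum_\psi c(\psi)e_\psi$, $\Lambda=\sum_\psi q^{d(\psi)+1}e_\psi$ (these are invertible). *)

theory Defs
  imports "HOL-Analysis.Analysis"
begin

type_synonym 'v cmat = "complex ^ 'v ^ 'v"
type_synonym 'v cvec = "complex ^ 'v"

definition msc :: "complex \<Rightarrow> 'v::finite cmat \<Rightarrow> 'v cmat" where
  "msc c M = (\<chi> i j. c * M $ i $ j)"

definition hadamard :: "'v::finite cmat \<Rightarrow> 'v cmat \<Rightarrow> 'v cmat" where
  "hadamard M N = (\<chi> i j. M $ i $ j * N $ i $ j)"

definition allones :: "'v::finite cmat" where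
  "allones = (\<chi> i j. 1)"

definition gdist :: "('v \<Rightarrow> 'v \<Rightarrow> bool) \<Rightarrow> 'v \<Rightarrow> 'v \<Rightarrow> nat" where
  "gdist adj y z = (LEAST n. (adj ^^ n) y z)"

definition connected_graph :: "('v \<Rightarrow> 'v \<Rightarrow> bool) \<Rightarrow> bool" where
  "connected_graph adj \<longleftrightarrow> (\<forall>y z. \<exists>n. (adj ^^ n) y z)"

definition diameter :: "('v::finite \<Rightarrow> 'v \<Rightarrow> bool) \<Rightarrow> nat" where
  "diameter adj = Max {gdist adj y z | y z. True}"

definition distance_regular :: "('v::finite \<Rightarrow> 'v \<Rightarrow> bool) \<Rightarrow> bool" where
  "distance_regular adj \<longleftrightarrow>
     (\<forall>y. \<not> adj y y) \<and> (\<forall>y z. adj y z = adj z y) \<and> connected_graph adj \<and>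
     (\<exists>p :: nat \<Rightarrow> nat \<Rightarrow> nat \<Rightarrow> nat. \<forall>y z i j.
        card {t. gdist adj y t = i \<and> gdist adj z t = j} = p (gdist adj y z) i j)"

definition adjmat :: "('v::finite \<Rightarrow> 'v \<Rightarrow> bool) \<Rightarrow> 'v cmat" where
  "adjmat adj = (\<chi> y z. if adj y z then 1 else 0)"

definition distmat :: "('v::finite \<Rightarrow> 'v \<Rightarrow> bool) \<Rightarrow> nat \<Rightarrow> 'v cmat" where
  "distmat adj i = (\<chi> y z. if gdist adj y z = i then 1 else 0)"

definition bose_mesner :: "('v::finite \<Rightarrow> 'v \<Rightarrow> bool) \<Rightarrow> 'v cmat set" where
  "bose_mesner adj = {M. \<exists>c. M = (\<Sum>i\<le>diameter adj. msc (c i) (distmat adj i))}"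

text \<open>E 0, ..., E D are the primitive idempotents of the Bose--Mesner algebra, i.e. a
  basis of it consisting of mutually orthogonal idempotents summing to I.
  (Since the Bose--Mesner algebra has dimension D+1, D+1 nonzero such elements form a basis.)
  Moreover E 0 = |X|^{-1} J.\<close>
definition primitive_idempotents :: "('v::finite \<Rightarrow> 'v \<Rightarrow> bool) \<Rightarrow> (nat \<Rightarrow> 'v cmat) \<Rightarrow> bool" where
  "primitive_idempotents adj E \<longleftrightarrow>
     (\<forall>i\<le>diameter adj. E i \<in> bose_mesner adj \<and> E i \<noteq> 0) \<and>
     (\<forall>i\<le>diameter adj. \<forall>j\<le>diameter adj. E i ** E j = (if i = j then E i else 0)) \<and>
     (\<Sum>i\<le>diameter adj. E i) = mat 1 \<and>
     E 0 = msc (1 / of_nat CARD('v)) allones"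

text \<open>Q-polynomial ordering via the Krein parameters:
  E_i o E_j = |X|^{-1} sum_h q^h_ij E_h, and q^h_ij is zero (resp. nonzero) whenever one of
  h,i,j is greater than (resp. equal to) the sum of the other two.\<close>
definition Q_polynomial :: "('v::finite \<Rightarrow> 'v \<Rightarrow> bool) \<Rightarrow> (nat \<Rightarrow> 'v cmat) \<Rightarrow> bool" where
  "Q_polynomial adj E \<longleftrightarrow>
     (\<exists>kr :: nat \<Rightarrow> nat \<Rightarrow> nat \<Rightarrow> complex.
        (\<forall>i\<le>diameter adj. \<forall>j\<le>diameter adj.
           hadamard (E i) (E j) =
             msc (1 / of_nat CARD('v)) (\<Sum>h\<le>diameter adj. msc (kr h i j) (E h))) \<and>
        (\<forall>h\<le>diameter adj. \<forall>i\<le>diameter adj. \<forall>j\<le>diameter adj.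
           ((h > i + j \<or> i > h + j \<or> j > h + i) \<longrightarrow> kr h i j = 0) \<and>
           ((h = i + j \<or> i = h + j \<or> j = h + i) \<longrightarrow> kr h i j \<noteq> 0)))"

definition dual_idem :: "('v::finite \<Rightarrow> 'v \<Rightarrow> bool) \<Rightarrow> 'v \<Rightarrow> nat \<Rightarrow> 'v cmat" where
  "dual_idem adj x i = (\<chi> y z. if y = z \<and> gdist adj x y = i then 1 else 0)"

definition dual_adj :: "'v::finite \<Rightarrow> (nat \<Rightarrow> 'v cmat) \<Rightarrow> 'v cmat" where
  "dual_adj x E = (\<chi> y z. if y = z then of_nat CARD('v) * E 1 $ x $ y else 0)"

definition qracah_ev :: "complex \<Rightarrow> nat \<Rightarrow> complex \<Rightarrow> complex \<Rightarrow> complex \<Rightarrow> nat \<Rightarrow> complex" where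
  "qracah_ev q D w u v i = w + u * q powi (2 * int i - int D) + v * q powi (int D - 2 * int i)"

inductive_set alg_gen :: "'v::finite cmat \<Rightarrow> 'v cmat \<Rightarrow> 'v cmat set" for M N where
  gen1: "M \<in> alg_gen M N"
| gen2: "N \<in> alg_gen M N"
| one: "mat 1 \<in> alg_gen M N"
| add: "P \<in> alg_gen M N \<Longrightarrow> Q \<in> alg_gen M N \<Longrightarrow> P + Q \<in> alg_gen M N"
| smult: "P \<in> alg_gen M N \<Longrightarrow> msc c P \<in> alg_gen M N"
| mult: "P \<in> alg_gen M N \<Longrightarrow> Q \<in> alg_gen M N \<Longrightarrow> P ** Q \<in> alg_gen M N"

definition terwilliger :: "('v::finite \<Rightarrow> 'v \<Rightarrow> bool) \<Rightarrow> 'v \<Rightarrow> (nat \<Rightarrow> 'v cmat) \<Rightarrow> 'v cmat set" where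
  "terwilliger adj x E = alg_gen (adjmat adj) (dual_adj x E)"

definition csubspace :: "'v::finite cvec set \<Rightarrow> bool" where
  "csubspace W \<longleftrightarrow> 0 \<in> W \<and> (\<forall>v\<in>W. \<forall>w\<in>W. v + w \<in> W) \<and> (\<forall>c. \<forall>v\<in>W. c *s v \<in> W)"

definition cspan :: "'v::finite cvec set \<Rightarrow> 'v cvec set" where
  "cspan S = \<Inter>{U. csubspace U \<and> S \<subseteq> U}"

definition is_module :: "'v::finite cmat set \<Rightarrow> 'v cvec set \<Rightarrow> bool" where
  "is_module TT W \<longleftrightarrow> csubspace W \<and> (\<forall>M\<in>TT. \<forall>w\<in>W. M *v w \<in> W)"

definition irreducible_module :: "'v::finite cmat set \<Rightarrow> 'v cvec set \<Rightarrow> bool" where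
  "irreducible_module TT W \<longleftrightarrow> is_module TT W \<and> W \<noteq> {0} \<and>
     (\<forall>W'. is_module TT W' \<and> W' \<subseteq> W \<longrightarrow> W' = {0} \<or> W' = W)"

definition img :: "'v::finite cmat \<Rightarrow> 'v cvec set \<Rightarrow> 'v cvec set" where
  "img M W = (\<lambda>w. M *v w) ` W"

definition thin :: "('v::finite \<Rightarrow> 'v \<Rightarrow> bool) \<Rightarrow> 'v \<Rightarrow> 'v cvec set \<Rightarrow> bool" where
  "thin adj x W \<longleftrightarrow> (\<forall>i. \<exists>u. \<forall>w\<in>img (dual_idem adj x i) W. \<exists>c. w = c *s u)"

definition module_iso :: "'v::finite cmat set \<Rightarrow> 'v cvec set \<Rightarrow> 'v cvec set \<Rightarrow> bool" where
  "module_iso TT W W' \<longleftrightarrow> (\<exists>\<sigma>. bij_betw \<sigma> W W' \<and>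
      (\<forall>v\<in>W. \<forall>w\<in>W. \<sigma> (v + w) = \<sigma> v + \<sigma> w) \<and>
      (\<forall>c. \<forall>v\<in>W. \<sigma> (c *s v) = c *s \<sigma> v) \<and>
      (\<forall>M\<in>TT. \<forall>v\<in>W. \<sigma> (M *v v) = M *v \<sigma> v))"

definition module_types :: "'v::finite cmat set \<Rightarrow> 'v cvec set set set" where
  "module_types TT = {{W'. irreducible_module TT W' \<and> module_iso TT W W'} | W. irreducible_module TT W}"

definition isotypic :: "'v::finite cvec set set \<Rightarrow> 'v cvec set" where
  "isotypic \<psi> = cspan (\<Union>\<psi>)"

definition type_proj :: "'v::finite cmat set \<Rightarrow> 'v cvec set set \<Rightarrow> 'v cmat" where
  "type_proj TT \<psi> = (THE P. (\<forall>v\<in>isotypic \<psi>. P *v v = v) \<and>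
      (\<forall>\<phi>\<in>module_types TT. \<phi> \<noteq> \<psi> \<longrightarrow> (\<forall>v\<in>isotypic \<phi>. P *v v = 0)))"

definition type_rep :: "'v::finite cvec set set \<Rightarrow> 'v cvec set" where
  "type_rep \<psi> = (SOME W. W \<in> \<psi>)"

definition clin_indep :: "'v::finite cvec list \<Rightarrow> bool" where
  "clin_indep bs \<longleftrightarrow> (\<forall>cs. length cs = length bs \<longrightarrow>
      (\<Sum>k<length bs. (cs ! k) *s (bs ! k)) = 0 \<longrightarrow> (\<forall>k<length bs. cs ! k = 0))"

definition cbasis :: "'v::finite cvec set \<Rightarrow> 'v cvec list \<Rightarrow> bool" where
  "cbasis W bs \<longleftrightarrow> clin_indep bs \<and>
      W = {\<Sum>k<length bs. (cs ! k) *s (bs ! k) | cs. length cs = length bs}"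

definition trace_on :: "'v::finite cvec set \<Rightarrow> 'v cmat \<Rightarrow> complex" where
  "trace_on W M = (SOME t. \<exists>bs cf. cbasis W bs \<and>
      (\<forall>k<length bs. M *v (bs ! k) = (\<Sum>j<length bs. cf k j *s (bs ! j))) \<and>
      t = (\<Sum>k<length bs. cf k k))"

definition boldA :: "('v::finite \<Rightarrow> 'v \<Rightarrow> bool) \<Rightarrow> complex \<Rightarrow> complex \<Rightarrow> complex \<Rightarrow> 'v cmat" where
  "boldA adj w a v = msc (1 / (a * v)) (adjmat adj - mat w)"

definition boldB :: "'v::finite \<Rightarrow> (nat \<Rightarrow> 'v cmat) \<Rightarrow> complex \<Rightarrow> complex \<Rightarrow> complex \<Rightarrow> 'v cmat" where
  "boldB x E ws b vs = msc (1 / (b * vs)) (dual_adj x E - mat ws)"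

definition endpoint :: "('v::finite \<Rightarrow> 'v \<Rightarrow> bool) \<Rightarrow> 'v \<Rightarrow> 'v cvec set \<Rightarrow> nat" where
  "endpoint adj x W = (LEAST i. img (dual_idem adj x i) W \<noteq> {0})"

definition dual_endpoint :: "('v::finite \<Rightarrow> 'v \<Rightarrow> bool) \<Rightarrow> (nat \<Rightarrow> 'v cmat) \<Rightarrow> 'v cvec set \<Rightarrow> nat" where
  "dual_endpoint adj E W = (LEAST i. i \<le> diameter adj \<and> img (E i) W \<noteq> {0})"

definition mod_diameter :: "('v::finite \<Rightarrow> 'v \<Rightarrow> bool) \<Rightarrow> 'v \<Rightarrow> 'v cvec set \<Rightarrow> nat" where
  "mod_diameter adj x W = card {i. img (dual_idem adj x i) W \<noteq> {0}} - 1"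

definition aW :: "('v::finite \<Rightarrow> 'v \<Rightarrow> bool) \<Rightarrow> 'v \<Rightarrow> (nat \<Rightarrow> 'v cmat) \<Rightarrow> complex \<Rightarrow> complex
    \<Rightarrow> 'v cvec set \<Rightarrow> complex" where
  "aW adj x E q a W = a * q powi (2 * int (dual_endpoint adj E W) + int (mod_diameter adj x W)
                                    - int (diameter adj))"

definition bW :: "('v::finite \<Rightarrow> 'v \<Rightarrow> bool) \<Rightarrow> 'v \<Rightarrow> complex \<Rightarrow> complex
    \<Rightarrow> 'v cvec set \<Rightarrow> complex" where
  "bW adj x q b W = b * q powi (2 * int (endpoint adj x W) + int (mod_diameter adj x W)
                                    - int (diameter adj))"

definition lev :: "complex \<Rightarrow> complex \<Rightarrow> nat \<Rightarrow> nat \<Rightarrow> complex" where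
  "lev q s d i = s * q powi (2 * int i - int d) + inverse s * q powi (int d - 2 * int i)"

definition kappaW :: "('v::finite \<Rightarrow> 'v \<Rightarrow> bool) \<Rightarrow> 'v \<Rightarrow> (nat \<Rightarrow> 'v cmat) \<Rightarrow>
    complex \<Rightarrow> complex \<Rightarrow> complex \<Rightarrow> complex \<Rightarrow> complex \<Rightarrow> 'v cvec set \<Rightarrow> complex" where
  "kappaW adj x E q a b w v W =
    (let d = mod_diameter adj x W; aa = aW adj x E q a W; bb = bW adj x q b W;
         \<rho> = endpoint adj x W;
         phi1 = (lev q bb d 0 - lev q bb d 1) *
                (trace_on W (dual_idem adj x \<rho> ** boldA adj w a v) - lev q aa d d)
     in if d = 0 then 0
        else aa / bb * q ^ (d - 1) + bb / aa * q powi (1 - int d)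
             + phi1 / ((q - inverse q) * (q ^ d - inverse q ^ d)))"

definition bold_a :: "('v::finite \<Rightarrow> 'v \<Rightarrow> bool) \<Rightarrow> 'v \<Rightarrow> (nat \<Rightarrow> 'v cmat) \<Rightarrow> complex \<Rightarrow> complex
    \<Rightarrow> 'v cmat" where
  "bold_a adj x E q a = (let TT = terwilliger adj x E in
     \<Sum>\<psi>\<in>module_types TT. msc (aW adj x E q a (type_rep \<psi>)) (type_proj TT \<psi>))"

definition bold_b :: "('v::finite \<Rightarrow> 'v \<Rightarrow> bool) \<Rightarrow> 'v \<Rightarrow> (nat \<Rightarrow> 'v cmat) \<Rightarrow> complex \<Rightarrow> complex
    \<Rightarrow> 'v cmat" where
  "bold_b adj x E q b = (let TT = terwilliger adj x E in
     \<Sum>\<psi>\<in>module_types TT. msc (bW adj x q b (type_rep \<psi>)) (type_proj TT \<psi>))"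

definition bold_c :: "('v::finite \<Rightarrow> 'v \<Rightarrow> bool) \<Rightarrow> 'v \<Rightarrow> (nat \<Rightarrow> 'v cmat)
    \<Rightarrow> ('v cvec set set \<Rightarrow> complex) \<Rightarrow> 'v cmat" where
  "bold_c adj x E c = (let TT = terwilliger adj x E in
     \<Sum>\<psi>\<in>module_types TT. msc (c \<psi>) (type_proj TT \<psi>))"

definition bold_Lambda :: "('v::finite \<Rightarrow> 'v \<Rightarrow> bool) \<Rightarrow> 'v \<Rightarrow> (nat \<Rightarrow> 'v cmat) \<Rightarrow> complex
    \<Rightarrow> 'v cmat" where
  "bold_Lambda adj x E q = (let TT = terwilliger adj x E in
     \<Sum>\<psi>\<in>module_types TT. msc (q ^ (mod_diameter adj x (type_rep \<psi>) + 1)) (type_proj TT \<psi>))"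

text \<open>A Delta_q-module structure on V in which the generators act as X, Y, Z is exactly
  an assignment of the generators satisfying the defining relations, i.e. each of the three
  elements below commutes with the images X, Y, Z of the generators.\<close>
definition aw_elem :: "complex \<Rightarrow> 'v::finite cmat \<Rightarrow> 'v cmat \<Rightarrow> 'v cmat \<Rightarrow> 'v cmat" where
  "aw_elem q X Y Z = X + msc (1 / (q\<^sup>2 - inverse q ^ 2)) (msc q (Y ** Z) - msc (inverse q) (Z ** Y))"

definition commutes_with_all :: "'v::finite cmat \<Rightarrow> 'v cmat list \<Rightarrow> bool" where
  "commutes_with_all M Ns \<longleftrightarrow> (\<forall>N\<in>set Ns. M ** N = N ** M)"

definition Delta_q_module :: "complex \<Rightarrow> 'v::finite cmat \<Rightarrow> 'v cmat \<Rightarrow> 'v cmat \<Rightarrow> bool" where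
  "Delta_q_module q X Y Z \<longleftrightarrow>
     commutes_with_all (aw_elem q X Y Z) [X, Y, Z] \<and>
     commutes_with_all (aw_elem q Y Z X) [X, Y, Z] \<and>
     commutes_with_all (aw_elem q Z X Y) [X, Y, Z]"

end

theory Submission
  imports Defs
begin

text \<open>
  The three right-hand sides are built from \<open>\<^bold>a, \<^bold>b, \<^bold>c, \<Lambda>\<close> and their inverses, i.e. from
  linear combinations \<open>\<Sum>\<psi> \<alpha>(\<psi>) e\<^sub>\<psi>\<close> of the projections onto the isotypic components of \<open>V\<close>.
  Such an element acts as the scalar \<open>\<alpha>(\<psi>)\<close> on every irreducible \<open>T\<close>-module of type \<open>\<psi>\<close>,
  so it commutes with \<open>T\<close> as soon as \<open>V\<close> is the sum of its irreducible submodules.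
  That holds because \<open>T\<close> is closed under conjugate transposition: \<open>A\<close> is real symmetric and
  \<open>A\<^sup>*\<close> is real diagonal, the latter since every primitive idempotent \<open>E\<^sub>i\<close> is Hermitian.
  Hence the three Askey--Wilson elements are central in \<open>T\<close>, and \<open>\<^bold>A, \<^bold>B, \<^bold>C \<in> T\<close> gives
  the defining relations of \<open>\<Delta>\<^sub>q\<close>. Of the parameters only their being nonzero matters.
\<close>

lemma relpowp_sym:
  fixes r :: "'a \<Rightarrow> 'a \<Rightarrow> bool"
  assumes "\<forall>y z. r y z = r z y"
  shows "(r ^^ n) y z = (r ^^ n) z y"
proof (induction n arbitrary: y z)
  case 0 then show ?case by (metis relpowp_0_E relpowp_0_I)
next
  case (Suc n)
  have "(r ^^ Suc n) y z = (r ^^ n OO r) y z" by simp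
  also have "\<dots> = (r OO r ^^ n) y z" by (simp add: relpowp_commute)
  also have "\<dots> = (r ^^ n OO r) z y" using Suc assms by (auto simp: OO_def)
  finally show ?case by simp
qed

lemma gdist_sym:
  assumes "\<forall>y z. adj y z = adj z y"
  shows "gdist adj y z = gdist adj z y"
  unfolding gdist_def using relpowp_sym[OF assms] by metis

interpretation msc: vector_space "msc :: complex \<Rightarrow> 'v::finite cmat \<Rightarrow> 'v cmat"
  by unfold_locales (simp_all add: msc_def vec_eq_iff algebra_simps)

lemma matrix_mul_sum_right: "(A::'v::finite cmat) ** sum f S = (\<Sum>x\<in>S. A ** f x)"
  by (induction S rule: infinite_finite_induct) (simp_all add: matrix_add_ldistrib)

lemma matrix_add_rdistrib: "(B + C) ** (A::'v::finite cmat) = B ** A + C ** A"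
  by (simp add: matrix_matrix_mult_def vec_eq_iff sum.distrib algebra_simps)

lemma matrix_mul_sum_left: "sum f S ** (A::'v::finite cmat) = (\<Sum>x\<in>S. f x ** A)"
  by (induction S rule: infinite_finite_induct) (simp_all add: matrix_add_rdistrib)

lemma matrix_diff_rdistrib: "(B - C) ** (A::'v::finite cmat) = B ** A - C ** A"
  by (simp add: matrix_matrix_mult_def vec_eq_iff sum_subtractf algebra_simps)

lemma matrix_diff_ldistrib: "(A::'v::finite cmat) ** (B - C) = A ** B - A ** C"
  by (simp add: matrix_matrix_mult_def vec_eq_iff sum_subtractf algebra_simps)

lemma matrix_mul_uminus_right: "(A::'v::finite cmat) ** (- B) = - (A ** B)"
  by (simp add: matrix_matrix_mult_def vec_eq_iff sum_negf)

lemma matrix_mul_msc_right: "(A::'v::finite cmat) ** msc c B = msc c (A ** B)"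
  by (simp add: msc_def matrix_matrix_mult_def vec_eq_iff sum_distrib_left algebra_simps)

lemma matrix_mul_msc_left: "msc c (A::'v::finite cmat) ** B = msc c (A ** B)"
  by (simp add: msc_def matrix_matrix_mult_def vec_eq_iff sum_distrib_left algebra_simps)

lemma msc_matrix_vector_mult: "msc c (M::'v::finite cmat) *v w = c *s (M *v w)"
  by (simp add: msc_def matrix_vector_mult_def vec_eq_iff sum_distrib_left algebra_simps)

lemma sum_matrix_vector_mult: "sum f S *v (w::'v::finite cvec) = (\<Sum>x\<in>S. f x *v w)"
  by (induction S rule: infinite_finite_induct) (simp_all add: matrix_vector_mult_add_rdistrib)

lemma matrix_vector_mult_smult: "(M::'v::finite cmat) *v (c *s w) = c *s (M *v w)"
  by (simp add: matrix_vector_mult_def vec_eq_iff sum_distrib_left algebra_simps)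

lemma msc_msc: "msc c (msc d A) = msc (c * d) (A::'v::finite cmat)"
  by (simp add: msc_def vec_eq_iff algebra_simps)

lemma msc_zero: "msc c 0 = (0::'v::finite cmat)"
  by (simp add: msc_def vec_eq_iff)

lemma msc_eq_0_imp: "msc c M = (0::'v::finite cmat) \<Longrightarrow> M \<noteq> 0 \<Longrightarrow> c = 0"
  by (auto simp: msc_def vec_eq_iff)

definition ctrans :: "'v::finite cmat \<Rightarrow> 'v cmat" where
  "ctrans M = (\<chi> i j. cnj (M $ j $ i))"

lemma ctrans_mult: "ctrans A ** ctrans B = ctrans (B ** (A::'v::finite cmat))"
  by (simp add: ctrans_def matrix_matrix_mult_def vec_eq_iff mult.commute)

lemma ctrans_ctrans: "ctrans (ctrans A) = (A::'v::finite cmat)"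
  by (simp add: ctrans_def vec_eq_iff)

lemma ctrans_add: "ctrans (A + B) = ctrans A + ctrans (B::'v::finite cmat)"
  by (simp add: ctrans_def vec_eq_iff)

lemma ctrans_diff: "ctrans (A - B) = ctrans A - ctrans (B::'v::finite cmat)"
  by (simp add: ctrans_def vec_eq_iff)

lemma ctrans_sum: "ctrans (sum f S) = (\<Sum>x\<in>S. ctrans (f x::'v::finite cmat))"
  by (induction S rule: infinite_finite_induct) (simp_all add: ctrans_add ctrans_def vec_eq_iff)

lemma ctrans_msc: "ctrans (msc c M) = msc (cnj c) (ctrans (M::'v::finite cmat))"
  by (simp add: ctrans_def msc_def vec_eq_iff)

lemma ctrans_mat1: "ctrans (mat 1) = (mat 1 :: 'v::finite cmat)"
  by (simp add: ctrans_def mat_def vec_eq_iff)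

lemma trace_ctrans: "trace (ctrans A) = cnj (trace (A::'v::finite cmat))"
  by (simp add: trace_def ctrans_def)

lemma trace_mult_ctrans_self:
  "trace (M ** ctrans M) = of_real (\<Sum>i\<in>UNIV. \<Sum>k\<in>UNIV. (cmod ((M::'v::finite cmat) $ i $ k))\<^sup>2)"
  by (simp add: trace_def ctrans_def matrix_matrix_mult_def complex_mult_cnj cmod_power2 of_real_sum)

lemma trace_mult_ctrans_self_eq_0_imp:
  assumes "Re (trace (M ** ctrans M)) = 0"
  shows "M = (0::'v::finite cmat)"
proof -
  have "(\<Sum>i\<in>UNIV. \<Sum>k\<in>UNIV. (cmod (M $ i $ k))\<^sup>2) = 0"
    using assms by (simp only: trace_mult_ctrans_self Re_complex_of_real)
  then have "\<forall>i. (\<Sum>k\<in>UNIV. (cmod (M $ i $ k))\<^sup>2) = 0"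
    by (subst (asm) sum_nonneg_eq_0_iff) (auto intro: sum_nonneg)
  then have "\<forall>i k. (cmod (M $ i $ k))\<^sup>2 = 0"
    by (subst (asm) sum_nonneg_eq_0_iff) auto
  then show ?thesis by (simp add: vec_eq_iff)
qed

text \<open>
  From \<open>P H = \<mu> P\<close> with \<open>H = P\<^sup>*\<close> idempotent one gets \<open>\<mu>\<^sup>2 = \<mu>\<close>, and \<open>\<mu> \<noteq> 0\<close> by positivity
  of \<open>tr (P P\<^sup>*)\<close>; then \<open>G = H - P\<close> satisfies \<open>G\<^sup>2 = G\<close> and \<open>G\<^sup>* = -G\<close>, so
  \<open>tr (G G\<^sup>*) = tr P - cnj (tr P)\<close> is purely imaginary, forcing \<open>G = 0\<close>.
\<close>
lemma idempotent_ctrans_eq: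
  fixes P :: "'v::finite cmat"
  assumes PP: "P ** P = P" and P0: "P \<noteq> 0"
    and PH: "P ** ctrans P = msc \<mu> P" and HP: "ctrans P ** P = msc \<mu> P"
  shows "ctrans P = P"
proof -
  define H where "H = ctrans P"
  have HH: "H ** H = H" unfolding H_def ctrans_mult PP ..
  have mu_sq: "\<mu> * \<mu> = \<mu>"
  proof -
    have "msc (\<mu> * \<mu>) P = P ** H ** H"
      by (simp add: H_def PH matrix_mul_msc_left msc_msc)
    also have "\<dots> = P ** H" by (simp only: matrix_mul_assoc[symmetric] HH)
    also have "\<dots> = msc \<mu> P" by (simp add: H_def PH)
    finally have "msc (\<mu> * \<mu> - \<mu>) P = 0"
      by (simp add: msc_def vec_eq_iff algebra_simps)
    then show ?thesis using msc_eq_0_imp P0 by force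
  qed
  have "\<mu> \<noteq> 0"
  proof
    assume "\<mu> = 0"
    then have "P ** ctrans P = 0" using PH by (simp add: msc_def vec_eq_iff)
    then show False using trace_mult_ctrans_self_eq_0_imp[of P] P0 by (simp add: trace_def)
  qed
  with mu_sq have mu1: "\<mu> = 1" by (metis mult_cancel_right1)
  have msc1: "msc 1 P = P" by (simp add: msc_def vec_eq_iff)
  define G where "G = H - P"
  have GG: "G ** G = G"
    unfolding G_def matrix_diff_rdistrib matrix_diff_ldistrib HH PP
    using PH HP mu1 msc1 by (simp add: H_def)
  have ctrans_G: "ctrans G = - G"
    by (simp add: G_def ctrans_diff H_def ctrans_ctrans)
  have "trace (G ** ctrans G) = - trace G"
    unfolding ctrans_G matrix_mul_uminus_right GG by (simp add: trace_def sum_negf)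
  also have "\<dots> = trace P - cnj (trace P)"
    by (simp add: G_def trace_sub H_def trace_ctrans)
  finally have "Re (trace (G ** ctrans G)) = 0" by simp
  then have "G = 0" by (rule trace_mult_ctrans_self_eq_0_imp)
  then show ?thesis by (simp add: G_def H_def)
qed

section \<open>The primitive idempotents are Hermitian\<close>

lemma distmat_sym: "\<forall>y z. adj y z = adj z y \<Longrightarrow> distmat adj i $ y $ z = distmat adj i $ z $ y"
  using gdist_sym[of adj y z] by (simp add: distmat_def)

lemma ctrans_distmat: "\<forall>y z. adj y z = adj z y \<Longrightarrow> ctrans (distmat adj i) = distmat adj i"
  by (simp add: ctrans_def distmat_def vec_eq_iff gdist_sym)

lemma sum_distmat_in_span:
  "(\<Sum>i\<le>diameter adj. msc (c i) (distmat adj i)) \<in> msc.span (distmat adj ` {..diameter adj})"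
  by (intro msc.span_sum msc.span_scale msc.span_base) auto

lemma bose_mesner_in_span:
  "M \<in> bose_mesner adj \<Longrightarrow> M \<in> msc.span (distmat adj ` {..diameter adj})"
  by (auto simp: bose_mesner_def sum_distmat_in_span)

lemma primitive_idempotents_mult:
  "primitive_idempotents adj E \<Longrightarrow> i \<le> diameter adj \<Longrightarrow> j \<le> diameter adj \<Longrightarrow>
    E i ** E j = (if i = j then E i else 0)"
  by (simp add: primitive_idempotents_def)

lemma primitive_idempotents_nonzero:
  "primitive_idempotents adj E \<Longrightarrow> i \<le> diameter adj \<Longrightarrow> E i \<noteq> 0"
  by (simp add: primitive_idempotents_def)

lemma primitive_idempotents_absorb:
  assumes "primitive_idempotents adj E" "k \<le> diameter adj"
  shows "E k ** (\<Sum>j\<le>diameter adj. msc (\<mu> j) (E j)) = msc (\<mu> k) (E k)"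
    and "(\<Sum>j\<le>diameter adj. msc (\<mu> j) (E j)) ** E k = msc (\<mu> k) (E k)"
proof -
  have "E k ** (\<Sum>j\<le>diameter adj. msc (\<mu> j) (E j)) =
      (\<Sum>j\<le>diameter adj. if k = j then msc (\<mu> k) (E k) else 0)"
    unfolding matrix_mul_sum_right matrix_mul_msc_right
    using assms by (intro sum.cong) (auto simp: primitive_idempotents_mult msc_zero)
  then show "E k ** (\<Sum>j\<le>diameter adj. msc (\<mu> j) (E j)) = msc (\<mu> k) (E k)"
    using assms by simp
  have "(\<Sum>j\<le>diameter adj. msc (\<mu> j) (E j)) ** E k =
      (\<Sum>j\<le>diameter adj. if k = j then msc (\<mu> k) (E k) else 0)"
    unfolding matrix_mul_sum_left matrix_mul_msc_left
    using assms by (intro sum.cong) (auto simp: primitive_idempotents_mult msc_zero)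
  then show "(\<Sum>j\<le>diameter adj. msc (\<mu> j) (E j)) ** E k = msc (\<mu> k) (E k)"
    using assms by simp
qed

lemma primitive_idempotents_inj:
  assumes "primitive_idempotents adj E"
  shows "inj_on E {..diameter adj}"
proof
  fix i j assume ij: "i \<in> {..diameter adj}" "j \<in> {..diameter adj}" "E i = E j"
  show "i = j"
  proof (rule ccontr)
    assume "i \<noteq> j"
    then have "E i ** E j = 0" using primitive_idempotents_mult[OF assms, of i j] ij by simp
    moreover have "E i ** E j = E i" using primitive_idempotents_mult[OF assms, of i i] ij by simp
    ultimately show False using primitive_idempotents_nonzero[OF assms] ij by simp
  qed
qed

lemma primitive_idempotents_independent:
  assumes prim: "primitive_idempotents adj E"
  shows "msc.independent (E ` {..diameter adj})"
proof
  assume "msc.dependent (E ` {..diameter adj})"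
  then obtain u where u: "\<exists>v\<in>E ` {..diameter adj}. u v \<noteq> 0"
      "(\<Sum>v\<in>E ` {..diameter adj}. msc (u v) v) = 0"
    using msc.dependent_finite[of "E ` {..diameter adj}"] by auto
  then obtain k where k: "k \<le> diameter adj" "u (E k) \<noteq> 0" by auto
  have "(\<Sum>j\<le>diameter adj. msc (u (E j)) (E j)) ** E k = 0"
    using u(2) by (simp add: sum.reindex[OF primitive_idempotents_inj[OF prim]])
  then have "msc (u (E k)) (E k) = 0"
    using primitive_idempotents_absorb(2)[OF prim k(1), of "u \<circ> E"] by simp
  then show False using msc_eq_0_imp primitive_idempotents_nonzero[OF prim k(1)] k(2) by blast
qed

text \<open>The \<open>D + 1\<close> independent idempotents span the at most \<open>(D + 1)\<close>-dimensional Bose--Mesner algebra.\<close>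
lemma primitive_idempotents_expansion:
  assumes prim: "primitive_idempotents adj E"
    and M: "M \<in> msc.span (distmat adj ` {..diameter adj})"
  shows "\<exists>\<mu>. M = (\<Sum>j\<le>diameter adj. msc (\<mu> j) (E j))"
proof -
  define DS where "DS = distmat adj ` {..diameter adj}"
  define ES where "ES = E ` {..diameter adj}"
  have indep: "msc.independent ES"
    unfolding ES_def by (rule primitive_idempotents_independent[OF prim])
  have inj: "inj_on E {..diameter adj}" by (rule primitive_idempotents_inj[OF prim])
  have ES_sub: "ES \<subseteq> msc.span DS"
    using prim bose_mesner_in_span by (auto simp: ES_def DS_def primitive_idempotents_def)
  have DS_sub: "DS \<subseteq> msc.span ES"
  proof
    fix d assume d: "d \<in> DS"
    show "d \<in> msc.span ES"
    proof (rule ccontr)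
      assume nd: "d \<notin> msc.span ES"
      then have "d \<notin> ES" using msc.span_base by blast
      have "msc.independent (insert d ES)" using msc.independent_insertI[OF nd indep] .
      moreover have "insert d ES \<subseteq> msc.span DS" using ES_sub d msc.span_base by blast
      ultimately have "card (insert d ES) \<le> card DS"
        using msc.independent_span_bound[of DS] by (auto simp: DS_def)
      also have "card DS \<le> diameter adj + 1"
        unfolding DS_def using card_image_le[of "{..diameter adj}"] by simp
      finally show False using \<open>d \<notin> ES\<close> inj by (simp add: ES_def card_image)
    qed
  qed
  have "M \<in> msc.span ES"
    using M DS_sub msc.span_minimal[OF DS_sub msc.subspace_span] by (auto simp: DS_def)
  then obtain u where "M = (\<Sum>v\<in>ES. msc (u v) v)"
    using msc.span_finite[of ES] by (auto simp: ES_def)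
  then have "M = (\<Sum>j\<le>diameter adj. msc ((u \<circ> E) j) (E j))"
    by (simp add: ES_def sum.reindex[OF inj])
  then show ?thesis by blast
qed

text \<open>The conjugate transpose of \<open>E\<^sub>i\<close> stays in the Bose--Mesner algebra because the distance
  matrices are real symmetric.\<close>
lemma primitive_idempotent_ctrans:
  assumes sym: "\<forall>y z. adj y z = adj z y" and prim: "primitive_idempotents adj E"
    and i: "i \<le> diameter adj"
  shows "ctrans (E i) = E i"
proof -
  obtain c where c: "E i = (\<Sum>j\<le>diameter adj. msc (c j) (distmat adj j))"
    using prim i by (auto simp: primitive_idempotents_def bose_mesner_def)
  have "ctrans (E i) = (\<Sum>j\<le>diameter adj. msc (cnj (c j)) (distmat adj j))"
    unfolding c by (simp add: ctrans_sum ctrans_msc ctrans_distmat[OF sym])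
  then have "ctrans (E i) \<in> msc.span (distmat adj ` {..diameter adj})"
    by (simp only: sum_distmat_in_span)
  then obtain \<mu> where \<mu>: "ctrans (E i) = (\<Sum>j\<le>diameter adj. msc (\<mu> j) (E j))"
    using primitive_idempotents_expansion[OF prim] by blast
  show ?thesis
  proof (rule idempotent_ctrans_eq)
    show "E i ** E i = E i" using primitive_idempotents_mult[OF prim i i] by simp
    show "E i \<noteq> 0" by (rule primitive_idempotents_nonzero[OF prim i])
    show "E i ** ctrans (E i) = msc (\<mu> i) (E i)" "ctrans (E i) ** E i = msc (\<mu> i) (E i)"
      unfolding \<mu> using primitive_idempotents_absorb[OF prim i] by simp_all
  qed
qed

lemma primitive_idempotent_sym:
  assumes "\<forall>y z. adj y z = adj z y" "primitive_idempotents adj E" "i \<le> diameter adj"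
  shows "E i $ y $ z = E i $ z $ y"
proof -
  obtain c where "E i = (\<Sum>j\<le>diameter adj. msc (c j) (distmat adj j))"
    using assms by (auto simp: primitive_idempotents_def bose_mesner_def)
  then show ?thesis using distmat_sym[OF assms(1)] by (simp add: msc_def sum_component)
qed

lemma ctrans_adjmat: "\<forall>y z. adj y z = adj z y \<Longrightarrow> ctrans (adjmat adj) = adjmat adj"
  by (simp add: ctrans_def adjmat_def vec_eq_iff)

lemma ctrans_dual_adj:
  assumes sym: "\<forall>y z. adj y z = adj z y" and prim: "primitive_idempotents adj E"
    and D: "1 \<le> diameter adj"
  shows "ctrans (dual_adj x E) = dual_adj x E"
proof -
  have "cnj (E 1 $ x $ y) = E 1 $ x $ y" for y
  proof -
    have "cnj (E 1 $ x $ y) = ctrans (E 1) $ y $ x" by (simp add: ctrans_def)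
    also have "\<dots> = E 1 $ y $ x" by (simp only: primitive_idempotent_ctrans[OF sym prim D])
    finally show ?thesis using primitive_idempotent_sym[OF sym prim D] by simp
  qed
  then show ?thesis by (simp add: ctrans_def dual_adj_def vec_eq_iff)
qed

lemma alg_gen_ctrans:
  assumes "M \<in> alg_gen G1 G2" "ctrans G1 = G1" "ctrans G2 = G2"
  shows "ctrans M \<in> alg_gen G1 G2"
  using assms(1)
proof induction
  case (mult P Q)
  then show ?case using alg_gen.mult[of "ctrans Q" G1 G2 "ctrans P"] by (simp add: ctrans_mult)
qed (use assms in \<open>auto simp: ctrans_mat1 ctrans_add ctrans_msc intro: alg_gen.intros\<close>)

lemma terwilliger_ctrans_closed:
  assumes "distance_regular adj" "primitive_idempotents adj E" "1 \<le> diameter adj"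
  shows "\<forall>M\<in>terwilliger adj x E. ctrans M \<in> terwilliger adj x E"
proof -
  have sym: "\<forall>y z. adj y z = adj z y" using assms(1) by (simp add: distance_regular_def)
  show ?thesis unfolding terwilliger_def
    using alg_gen_ctrans ctrans_adjmat[OF sym] ctrans_dual_adj[OF sym assms(2,3)] by blast
qed

section \<open>Orthogonal projections in \<open>\<complex>\<^sup>X\<close>\<close>

definition cinner :: "'v::finite cvec \<Rightarrow> 'v cvec \<Rightarrow> complex" where
  "cinner x y = (\<Sum>i\<in>UNIV. x $ i * cnj (y $ i))"

definition orth :: "'v::finite cvec set \<Rightarrow> 'v cvec set" where
  "orth W = {z. \<forall>w\<in>W. cinner z w = 0}"

lemma cinner_matrix_vector_mult: "cinner (M *v x) y = cinner x (ctrans M *v y)"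
proof -
  have "cinner (M *v x) y = (\<Sum>i\<in>UNIV. \<Sum>j\<in>UNIV. M$i$j * x$j * cnj(y$i))"
    by (simp add: cinner_def matrix_vector_mult_def sum_distrib_right)
  also have "\<dots> = (\<Sum>j\<in>UNIV. \<Sum>i\<in>UNIV. M$i$j * x$j * cnj(y$i))" by (rule sum.swap)
  also have "\<dots> = cinner x (ctrans M *v y)"
    by (simp add: cinner_def ctrans_def matrix_vector_mult_def sum_distrib_left mult_ac)
  finally show ?thesis .
qed

lemma cinner_add_left: "cinner (a + b) y = cinner a y + cinner b y"
  by (simp add: cinner_def sum.distrib algebra_simps)

lemma cinner_add_right: "cinner y (a + b) = cinner y a + cinner y b"
  by (simp add: cinner_def sum.distrib algebra_simps)

lemma cinner_scale_left: "cinner (c *s a) y = c * cinner a y"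
  by (simp add: cinner_def sum_distrib_left algebra_simps)

lemma cinner_scale_right: "cinner a (c *s y) = cnj c * cinner a y"
  by (simp add: cinner_def sum_distrib_left algebra_simps)

lemma cinner_zero_left: "cinner 0 y = 0"
  by (simp add: cinner_def)

lemma cinner_zero_right: "cinner y 0 = 0"
  by (simp add: cinner_def)

lemma cinner_self_eq_0_imp: "cinner y y = 0 \<Longrightarrow> y = 0"
proof -
  assume a: "cinner y y = 0"
  have "cinner y y = of_real (\<Sum>i\<in>UNIV. (cmod (y $ i))\<^sup>2)"
    by (simp add: cinner_def complex_mult_cnj cmod_power2 of_real_sum)
  with a have "(\<Sum>i\<in>UNIV. (cmod (y $ i))\<^sup>2) = 0" by (simp only: of_real_eq_0_iff)
  then have "\<forall>i. (cmod (y $ i))\<^sup>2 = 0"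
    by (subst (asm) sum_nonneg_eq_0_iff) auto
  then show "y = 0" by (simp add: vec_eq_iff)
qed

lemma inner_eq_Re_cinner: "inner x y = Re (cinner x y)"
  by (simp add: inner_vec_def cinner_def inner_complex_def Re_sum)

lemma scaleR_eq_smult: "r *\<^sub>R (x::'v::finite cvec) = complex_of_real r *s x"
  unfolding vec_eq_iff vector_scaleR_component vector_smult_component by (simp add: scaleR_conv_of_real)

lemma csubspace_imp_subspace: "csubspace W \<Longrightarrow> subspace W"
  by (simp add: csubspace_def subspace_def scaleR_eq_smult)

lemma csubspace_iff_vec_subspace: "csubspace W \<longleftrightarrow> vec.subspace W"
  by (simp add: csubspace_def vec.subspace_def)

lemma csubspace_diff: "csubspace W \<Longrightarrow> a \<in> W \<Longrightarrow> b \<in> W \<Longrightarrow> a - b \<in> W"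
  unfolding csubspace_iff_vec_subspace by (rule vec.subspace_diff)

lemma csubspace_orth: "csubspace (orth W)"
  by (simp add: csubspace_def orth_def cinner_zero_left cinner_add_left cinner_scale_left)

lemma orth_inter_eq_0: "csubspace W \<Longrightarrow> y \<in> W \<Longrightarrow> y \<in> orth W \<Longrightarrow> y = 0"
  by (auto simp: orth_def intro: cinner_self_eq_0_imp)

text \<open>The library's real orthogonal decomposition is complex orthogonal, as \<open>W\<close> is closed under
  multiplication by \<open>\<i>\<close>.\<close>
lemma orth_decomp:
  assumes "csubspace W"
  shows "\<exists>y\<in>W. v - y \<in> orth W"
proof -
  have sp: "span W = W" using csubspace_imp_subspace[OF assms] by (simp add: span_eq_iff)
  obtain y z where yz: "y \<in> span W" "\<And>w. w \<in> span W \<Longrightarrow> orthogonal z w" "v = y + z"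
    using orthogonal_subspace_decomp_exists[of W v] by metis
  have "cinner z w = 0" if "w \<in> W" for w
  proof -
    have "Re (cinner z w) = 0" using yz(2)[of w] that sp by (simp add: orthogonal_def inner_eq_Re_cinner)
    moreover have "\<i> *s w \<in> W" using assms that by (simp add: csubspace_def)
    then have "Re (cinner z (\<i> *s w)) = 0" using yz(2) sp by (simp add: orthogonal_def inner_eq_Re_cinner)
    then have "Im (cinner z w) = 0" by (simp add: cinner_scale_right)
    ultimately show ?thesis by (simp add: complex_eq_iff)
  qed
  then show ?thesis using yz sp by (intro bexI[of _ y]) (auto simp: orth_def)
qed

definition proj :: "'v::finite cvec set \<Rightarrow> 'v cvec \<Rightarrow> 'v cvec" where
  "proj W v = (THE y. y \<in> W \<and> v - y \<in> orth W)"

lemma proj_eqI: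
  assumes "csubspace W" "y \<in> W" "v - y \<in> orth W"
  shows "proj W v = y"
  unfolding proj_def
proof (rule the_equality)
  show "y \<in> W \<and> v - y \<in> orth W" using assms by auto
  fix y' assume y': "y' \<in> W \<and> v - y' \<in> orth W"
  have "y' - y \<in> W" using assms y' csubspace_diff by blast
  moreover have "(v - y) - (v - y') \<in> orth W"
    using assms y' csubspace_diff[OF csubspace_orth] by blast
  ultimately show "y' = y" using orth_inter_eq_0[OF assms(1), of "y' - y"] by (simp add: algebra_simps)
qed

lemma
  assumes "csubspace W"
  shows proj_in: "proj W v \<in> W" and proj_diff_in_orth: "v - proj W v \<in> orth W"
proof -
  obtain y where "y \<in> W" "v - y \<in> orth W" using orth_decomp[OF assms] by blast
  then show "proj W v \<in> W" "v - proj W v \<in> orth W" using proj_eqI[OF assms] by simp_all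
qed

lemma proj_add:
  assumes "csubspace W" shows "proj W (a + b) = proj W a + proj W b"
proof (rule proj_eqI[OF assms])
  show "proj W a + proj W b \<in> W" using proj_in[OF assms] assms by (simp add: csubspace_def)
  have "(a - proj W a) + (b - proj W b) \<in> orth W"
    using proj_diff_in_orth[OF assms] csubspace_orth[of W] by (simp add: csubspace_def)
  then show "a + b - (proj W a + proj W b) \<in> orth W" by (simp add: algebra_simps)
qed

lemma proj_scale:
  assumes "csubspace W" shows "proj W (c *s a) = c *s proj W a"
proof (rule proj_eqI[OF assms])
  show "c *s proj W a \<in> W" using proj_in[OF assms] assms by (simp add: csubspace_def)
  have "c *s (a - proj W a) \<in> orth W"
    using proj_diff_in_orth[OF assms] csubspace_orth[of W] unfolding csubspace_def by blast
  then show "c *s a - c *s proj W a \<in> orth W" by (simp add: vector_ssub_ldistrib)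
qed

lemma proj_linear: "csubspace W \<Longrightarrow> Vector_Spaces.linear (*s) (*s) (proj W)"
  unfolding Vector_Spaces.linear_iff using vec.vector_space_axioms by (simp add: proj_add proj_scale)

lemma proj_id: "csubspace W \<Longrightarrow> v \<in> W \<Longrightarrow> proj W v = v"
  using proj_eqI[of W v v] csubspace_orth[of W] by (simp add: csubspace_def)

lemma proj_eq_0_iff:
  assumes "csubspace W" shows "proj W v = 0 \<longleftrightarrow> v \<in> orth W"
proof
  assume "proj W v = 0"
  then show "v \<in> orth W" using proj_diff_in_orth[OF assms, of v] by simp
next
  assume "v \<in> orth W"
  then show "proj W v = 0" using proj_eqI[OF assms, of 0 v] assms by (simp add: csubspace_def)
qed

section \<open>Modules of an algebra closed under conjugate transposition\<close>

lemma module_inter: "is_module TT W \<Longrightarrow> is_module TT W' \<Longrightarrow> is_module TT (W \<inter> W')"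
  by (auto simp: is_module_def csubspace_def)

lemma module_UNIV: "is_module TT (UNIV :: 'v::finite cvec set)"
  by (auto simp: is_module_def csubspace_def)

lemma irreducible_module_closed:
  "irreducible_module TT W \<Longrightarrow> M \<in> TT \<Longrightarrow> w \<in> W \<Longrightarrow> M *v w \<in> W"
  by (auto simp: irreducible_module_def is_module_def)

lemma module_iso_refl: "module_iso TT W W"
  unfolding module_iso_def by (rule exI[of _ id]) auto

lemma module_iso_trans:
  assumes "module_iso TT W1 W2" "module_iso TT W2 W3" shows "module_iso TT W1 W3"
proof -
  obtain f where f: "bij_betw f W1 W2" "\<forall>v\<in>W1. \<forall>w\<in>W1. f (v + w) = f v + f w"
      "\<forall>c. \<forall>v\<in>W1. f (c *s v) = c *s f v" "\<forall>M\<in>TT. \<forall>v\<in>W1. f (M *v v) = M *v f v"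
    using assms(1) unfolding module_iso_def by blast
  obtain g where g: "bij_betw g W2 W3" "\<forall>v\<in>W2. \<forall>w\<in>W2. g (v + w) = g v + g w"
      "\<forall>c. \<forall>v\<in>W2. g (c *s v) = c *s g v" "\<forall>M\<in>TT. \<forall>v\<in>W2. g (M *v v) = M *v g v"
    using assms(2) unfolding module_iso_def by blast
  have "v \<in> W1 \<Longrightarrow> f v \<in> W2" for v using f(1) bij_betwE by blast
  then show ?thesis unfolding module_iso_def
    using bij_betw_trans[OF f(1) g(1)] f g by (intro exI[of _ "g \<circ> f"]) auto
qed

lemma module_iso_sym:
  assumes "module_iso TT W1 W2" "is_module TT W1" shows "module_iso TT W2 W1"
proof -
  obtain f where f: "bij_betw f W1 W2" "\<forall>v\<in>W1. \<forall>w\<in>W1. f (v + w) = f v + f w"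
      "\<forall>c. \<forall>v\<in>W1. f (c *s v) = c *s f v" "\<forall>M\<in>TT. \<forall>v\<in>W1. f (M *v v) = M *v f v"
    using assms(1) unfolding module_iso_def by blast
  define g where "g = inv_into W1 f"
  have g: "bij_betw g W2 W1" using f(1) bij_betw_inv_into g_def by blast
  have gW: "v \<in> W2 \<Longrightarrow> g v \<in> W1" for v using g bij_betwE by blast
  have fg: "v \<in> W2 \<Longrightarrow> f (g v) = v" for v using f(1) g_def bij_betw_inv_into_right by metis
  have gf: "v \<in> W1 \<Longrightarrow> g (f v) = v" for v using f(1) g_def bij_betw_inv_into_left by metis
  have cs: "csubspace W1" using assms(2) by (simp add: is_module_def)
  have "g (a + b) = g a + g b" if "a \<in> W2" "b \<in> W2" for a b
  proof -
    have "g a + g b \<in> W1" using cs gW that by (simp add: csubspace_def)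
    moreover have "f (g a + g b) = a + b" using f(2) gW fg that by simp
    ultimately show ?thesis using gf by metis
  qed
  moreover have "g (c *s a) = c *s g a" if "a \<in> W2" for a c
  proof -
    have "c *s g a \<in> W1" using cs gW that by (simp add: csubspace_def)
    moreover have "f (c *s g a) = c *s a" using f(3) gW fg that by simp
    ultimately show ?thesis using gf by metis
  qed
  moreover have "g (M *v a) = M *v g a" if "a \<in> W2" "M \<in> TT" for a M
  proof -
    have "M *v g a \<in> W1" using assms(2) gW that by (simp add: is_module_def)
    moreover have "f (M *v g a) = M *v a" using f(4) gW fg that by simp
    ultimately show ?thesis using gf by metis
  qed
  ultimately show ?thesis unfolding module_iso_def using g by blast
qed

definition iso_class :: "'v::finite cmat set \<Rightarrow> 'v cvec set \<Rightarrow> 'v cvec set set" where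
  "iso_class TT W = {W'. irreducible_module TT W' \<and> module_iso TT W W'}"

lemma iso_class_self: "irreducible_module TT W \<Longrightarrow> W \<in> iso_class TT W"
  by (simp add: iso_class_def module_iso_refl)

lemma iso_class_in_module_types: "irreducible_module TT W \<Longrightarrow> iso_class TT W \<in> module_types TT"
  by (auto simp: iso_class_def module_types_def)

lemma module_types_irreducible: "\<psi> \<in> module_types TT \<Longrightarrow> W \<in> \<psi> \<Longrightarrow> irreducible_module TT W"
  by (auto simp: module_types_def)

lemma module_types_eq_iso_class:
  assumes "\<psi> \<in> module_types TT" "W \<in> \<psi>" shows "\<psi> = iso_class TT W"
proof -
  obtain W0 where W0: "irreducible_module TT W0" "\<psi> = iso_class TT W0"
    using assms(1) by (auto simp: module_types_def iso_class_def)
  have W: "irreducible_module TT W" "module_iso TT W0 W" using assms(2) W0 by (auto simp: iso_class_def)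
  have "module_iso TT W W0" using module_iso_sym W W0 by (auto simp: irreducible_module_def)
  then show ?thesis using W0 W module_iso_trans by (auto simp: iso_class_def)
qed

lemma iso_class_eq:
  assumes "module_iso TT W W'" "is_module TT W" shows "iso_class TT W = iso_class TT W'"
  using module_iso_trans[OF module_iso_sym[OF assms]] module_iso_trans[OF assms(1)]
  unfolding iso_class_def by blast

lemma module_types_nonempty: "\<psi> \<in> module_types TT \<Longrightarrow> \<exists>W. W \<in> \<psi>"
  by (auto simp: module_types_def intro: module_iso_refl)

lemma cspan_csubspace: "csubspace (cspan S)"
  by (auto simp: cspan_def csubspace_def)

lemma isotypic_csubspace: "csubspace (isotypic \<psi>)"
  by (simp add: isotypic_def cspan_csubspace)

lemma cspan_superset: "S \<subseteq> cspan S"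
  by (auto simp: cspan_def)

lemma cspan_minimal: "csubspace U \<Longrightarrow> S \<subseteq> U \<Longrightarrow> cspan S \<subseteq> U"
  by (auto simp: cspan_def)

lemma irreducible_subset_isotypic:
  "irreducible_module TT W \<Longrightarrow> W \<subseteq> isotypic (iso_class TT W)"
  unfolding isotypic_def using iso_class_self cspan_superset by blast

definition centralizer :: "'v::finite cmat set \<Rightarrow> 'v cmat set" where
  "centralizer TT = {M. \<forall>N\<in>TT. M ** N = N ** M}"

lemma centralizer_add: "M \<in> centralizer TT \<Longrightarrow> N \<in> centralizer TT \<Longrightarrow> M + N \<in> centralizer TT"
  by (simp add: centralizer_def matrix_add_rdistrib matrix_add_ldistrib)

lemma centralizer_mult: "M \<in> centralizer TT \<Longrightarrow> N \<in> centralizer TT \<Longrightarrow> M ** N \<in> centralizer TT"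
  by (simp add: centralizer_def) (metis matrix_mul_assoc)

lemma centralizer_msc: "M \<in> centralizer TT \<Longrightarrow> msc c M \<in> centralizer TT"
  by (simp add: centralizer_def matrix_mul_msc_left matrix_mul_msc_right)

lemma csubspace_psubset_dim_less:
  assumes "csubspace A" "csubspace B" "A \<subset> B" shows "vec.dim A < vec.dim B"
  using assms vec.dim_psubset by (metis csubspace_iff_vec_subspace vec.span_eq_iff)

lemma module_minimal_irreducible:
  assumes "is_module TT W" "W \<noteq> {0}"
  obtains W0 where "irreducible_module TT W0" "W0 \<subseteq> W"
proof -
  define Sm where "Sm = {W'. is_module TT W' \<and> W' \<subseteq> W \<and> W' \<noteq> {0}}"
  have "W \<in> Sm" using assms by (simp add: Sm_def)
  then obtain W0 where W0: "W0 \<in> Sm" and mn: "\<And>W'. W' \<in> Sm \<Longrightarrow> vec.dim W0 \<le> vec.dim W'"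
    using ex_has_least_nat[of "\<lambda>W'. W' \<in> Sm" W vec.dim] by blast
  have W0m: "is_module TT W0" "W0 \<subseteq> W" "W0 \<noteq> {0}" using W0 by (auto simp: Sm_def)
  have "irreducible_module TT W0"
    unfolding irreducible_module_def
  proof (intro conjI allI impI W0m(1) W0m(3))
    fix W' assume W': "is_module TT W' \<and> W' \<subseteq> W0"
    show "W' = {0} \<or> W' = W0"
    proof (rule ccontr)
      assume "\<not> (W' = {0} \<or> W' = W0)"
      then have "W' \<subset> W0" "W' \<in> Sm" using W' W0m by (auto simp: Sm_def)
      then have "vec.dim W' < vec.dim W0" using csubspace_psubset_dim_less W' W0m by (auto simp: is_module_def)
      then show False using mn \<open>W' \<in> Sm\<close> by fastforce
    qed
  qed
  then show ?thesis using that W0m by blast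
qed

locale ctrans_closed =
  fixes TT :: "'v::finite cmat set"
  assumes ctrans_closed: "\<forall>M\<in>TT. ctrans M \<in> TT"
begin

lemma module_orth:
  assumes "is_module TT W"
  shows "is_module TT (orth W)"
  unfolding is_module_def
proof (intro conjI ballI)
  show "csubspace (orth W)" by (rule csubspace_orth)
  fix M z assume M: "M \<in> TT" and z: "z \<in> orth W"
  have "cinner (M *v z) w = 0" if "w \<in> W" for w
  proof -
    have "ctrans M *v w \<in> W" using assms ctrans_closed M that by (simp add: is_module_def)
    then show ?thesis using z by (simp add: cinner_matrix_vector_mult orth_def)
  qed
  then show "M *v z \<in> orth W" by (simp add: orth_def)
qed

lemma proj_module_commute:
  assumes "is_module TT W" "M \<in> TT"
  shows "proj W (M *v v) = M *v proj W v"
proof -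
  have cs: "csubspace W" using assms by (simp add: is_module_def)
  have "M *v proj W v \<in> W" using assms proj_in[OF cs] by (simp add: is_module_def)
  moreover have "M *v v - M *v proj W v \<in> orth W"
    using module_orth[OF assms(1)] assms(2) proj_diff_in_orth[OF cs, of v]
    unfolding is_module_def by (metis matrix_vector_mult_diff_distrib)
  ultimately show ?thesis using proj_eqI[OF cs] by metis
qed

text \<open>Complete reducibility: split off a minimal submodule and recurse on its orthogonal complement.\<close>
lemma module_subset_cspan_irreducible:
  assumes "is_module TT W" shows "W \<subseteq> cspan (\<Union>{W. irreducible_module TT W})"
  using assms
proof (induction "vec.dim W" arbitrary: W rule: less_induct)
  case less
  let ?IRR = "\<Union>{W. irreducible_module TT W}"
  have cs: "csubspace (cspan ?IRR)" by (rule cspan_csubspace)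
  show ?case
  proof (cases "W = {0}")
    case True then show ?thesis using cs by (auto simp: csubspace_def)
  next
    case False
    then obtain W0 where irr: "irreducible_module TT W0" and W0W: "W0 \<subseteq> W"
      by (rule module_minimal_irreducible[OF less.prems])
    have m0: "is_module TT W0" "W0 \<noteq> {0}" using irr by (simp_all add: irreducible_module_def)
    then have cs0: "csubspace W0" by (simp add: is_module_def)
    obtain w0 where w0: "w0 \<in> W0" "w0 \<noteq> 0" using m0(2) cs0 by (auto simp: csubspace_def)
    define W1 where "W1 = W \<inter> orth W0"
    have m1: "is_module TT W1"
      unfolding W1_def using module_inter[OF less.prems module_orth[OF m0(1)]] .
    have "w0 \<notin> orth W0" using w0 cinner_self_eq_0_imp by (auto simp: orth_def)
    then have "W1 \<subset> W" using w0 W0W by (auto simp: W1_def)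
    then have "vec.dim W1 < vec.dim W" using csubspace_psubset_dim_less m1 less.prems by (auto simp: is_module_def)
    then have IH: "W1 \<subseteq> cspan ?IRR" using less m1 by blast
    show ?thesis
    proof
      fix w assume w: "w \<in> W"
      have y: "proj W0 w \<in> W0" "w - proj W0 w \<in> orth W0"
        using proj_in[OF cs0] proj_diff_in_orth[OF cs0] by auto
      then have "proj W0 w \<in> ?IRR" using irr by blast
      then have "proj W0 w \<in> cspan ?IRR" by (rule subsetD[OF cspan_superset])
      moreover have "w - proj W0 w \<in> W"
        using w y W0W less.prems csubspace_diff by (auto simp: is_module_def)
      then have "w - proj W0 w \<in> cspan ?IRR" using IH y by (auto simp: W1_def)
      ultimately have "proj W0 w + (w - proj W0 w) \<in> cspan ?IRR"
        using cs unfolding csubspace_def by blast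
      then show "w \<in> cspan ?IRR" by simp
    qed
  qed
qed

lemma matrix_eq_on_irreducible:
  fixes M N :: "'v cmat"
  assumes "\<And>W w. irreducible_module TT W \<Longrightarrow> w \<in> W \<Longrightarrow> M *v w = N *v w"
  shows "M = N"
proof -
  have cz: "csubspace {v. M *v v = N *v v}"
    by (simp add: csubspace_def matrix_vector_right_distrib matrix_vector_mult_smult)
  have "\<Union>{W. irreducible_module TT W} \<subseteq> {v. M *v v = N *v v}" using assms by auto
  then have "\<forall>v. M *v v = N *v v"
    using cspan_minimal[OF cz] module_subset_cspan_irreducible[OF module_UNIV] by blast
  then show ?thesis by (simp add: matrix_eq)
qed

text \<open>Schur: the orthogonal projection onto \<open>W'\<close> restricts to a module isomorphism from \<open>W\<close>
  unless it vanishes on \<open>W\<close>.\<close>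
lemma irreducible_orth_if_not_iso:
  assumes W: "irreducible_module TT W" and W': "irreducible_module TT W'"
    and ni: "\<not> module_iso TT W W'"
  shows "W \<subseteq> orth W'"
proof (rule ccontr)
  assume nsub: "\<not> W \<subseteq> orth W'"
  have mW: "is_module TT W" and mW': "is_module TT W'" using W W' by (auto simp: irreducible_module_def)
  have cs: "csubspace W" "csubspace W'" using mW mW' by (auto simp: is_module_def)
  have "is_module TT (W \<inter> orth W')" using module_inter[OF mW module_orth[OF mW']] .
  then have "W \<inter> orth W' = {0} \<or> W \<inter> orth W' = W" using W by (auto simp: irreducible_module_def)
  then have K0: "W \<inter> orth W' = {0}" using nsub by auto
  define g where "g = proj W'"
  have g0: "a \<in> W \<Longrightarrow> g a = 0 \<Longrightarrow> a = 0" for a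
    using K0 proj_eq_0_iff[OF cs(2)] by (auto simp: g_def)
  have inj: "inj_on g W"
  proof
    fix a b assume ab: "a \<in> W" "b \<in> W" "g a = g b"
    then have "g (a - b) = 0" using proj_add[OF cs(2), of "a - b" b] by (simp add: g_def)
    then have "a - b = 0" using g0 ab csubspace_diff[OF cs(1)] by blast
    then show "a = b" by simp
  qed
  have mI: "is_module TT (g ` W)"
    unfolding is_module_def csubspace_def
  proof (intro conjI ballI allI)
    show "0 \<in> g ` W" using cs proj_id[OF cs(2), of 0] by (force simp: g_def csubspace_def)
    fix v w assume "v \<in> g ` W" "w \<in> g ` W"
    then obtain a b where "a \<in> W" "b \<in> W" "v = g a" "w = g b" by auto
    then show "v + w \<in> g ` W" using proj_add[OF cs(2)] cs(1)
      by (auto simp: g_def csubspace_def intro!: image_eqI[of _ _ "a + b"])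
  next
    fix c v assume "v \<in> g ` W"
    then obtain a where "a \<in> W" "v = g a" by auto
    then show "c *s v \<in> g ` W" using proj_scale[OF cs(2)] cs(1)
      by (auto simp: g_def csubspace_def intro!: image_eqI[of _ _ "c *s a"])
  next
    fix M v assume "M \<in> TT" "v \<in> g ` W"
    then obtain a where "a \<in> W" "v = g a" by auto
    then show "M *v v \<in> g ` W" using proj_module_commute[OF mW' \<open>M \<in> TT\<close>] mW \<open>M \<in> TT\<close>
      by (auto simp: g_def is_module_def intro!: image_eqI[of _ _ "M *v a"])
  qed
  have sub: "g ` W \<subseteq> W'" using proj_in[OF cs(2)] by (auto simp: g_def)
  obtain a where "a \<in> W" "a \<noteq> 0" using W cs(1) by (auto simp: irreducible_module_def csubspace_def)
  then have "g ` W \<noteq> {0}" using g0 by blast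
  then have "g ` W = W'" using W' mI sub unfolding irreducible_module_def by blast
  then have "module_iso TT W W'" unfolding module_iso_def using inj
    using proj_add[OF cs(2)] proj_scale[OF cs(2)] proj_module_commute[OF mW']
    by (auto simp: g_def bij_betw_def)
  then show False using ni by simp
qed

lemma isotypic_orth:
  assumes "\<psi> \<in> module_types TT" "\<phi> \<in> module_types TT" "\<psi> \<noteq> \<phi>"
  shows "isotypic \<psi> \<subseteq> orth (isotypic \<phi>)"
proof -
  have base: "w \<in> orth W'" if "w \<in> W" "W \<in> \<psi>" "W' \<in> \<phi>" for w W W'
  proof -
    have irr: "irreducible_module TT W" "irreducible_module TT W'"
      using that assms module_types_irreducible by blast+
    have "\<not> module_iso TT W W'"
    proof
      assume "module_iso TT W W'"
      then have "iso_class TT W = iso_class TT W'"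
        using irr(1) by (simp add: iso_class_eq irreducible_module_def)
      then show False
        using module_types_eq_iso_class[OF assms(1) that(2)]
          module_types_eq_iso_class[OF assms(2) that(3)] assms(3) by simp
    qed
    then show ?thesis using irreducible_orth_if_not_iso irr that by blast
  qed
  have "\<Union>\<psi> \<subseteq> orth (isotypic \<phi>)"
  proof
    fix w assume "w \<in> \<Union>\<psi>"
    then obtain W where W: "w \<in> W" "W \<in> \<psi>" by auto
    have cz: "csubspace {z. cinner w z = 0}"
      by (simp add: csubspace_def cinner_add_right cinner_scale_right cinner_zero_right)
    have "\<Union>\<phi> \<subseteq> {z. cinner w z = 0}" using base[OF W] by (auto simp: orth_def)
    then have "isotypic \<phi> \<subseteq> {z. cinner w z = 0}"
      unfolding isotypic_def using cspan_minimal[OF cz] by blast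
    then show "w \<in> orth (isotypic \<phi>)" by (auto simp: orth_def)
  qed
  then show ?thesis unfolding isotypic_def using cspan_minimal[OF csubspace_orth] by blast
qed

lemma type_proj_on_irreducible:
  assumes psi: "\<psi> \<in> module_types TT" and W: "irreducible_module TT W" "w \<in> W"
  shows "type_proj TT \<psi> *v w = (if \<psi> = iso_class TT W then w else 0)"
proof -
  define Q where "Q P \<longleftrightarrow> (\<forall>v\<in>isotypic \<psi>. P *v v = v) \<and>
      (\<forall>\<phi>\<in>module_types TT. \<phi> \<noteq> \<psi> \<longrightarrow> (\<forall>v\<in>isotypic \<phi>. P *v v = 0))" for P :: "'v cmat"
  have Q_irr: "P *v w = (if \<psi> = iso_class TT W then w else 0)"
    if "Q P" "irreducible_module TT W" "w \<in> W" for P W w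
  proof -
    have "w \<in> isotypic (iso_class TT W)" using irreducible_subset_isotypic that(2,3) by blast
    then show ?thesis using that(1) iso_class_in_module_types[OF that(2)] by (auto simp: Q_def)
  qed
  define P0 where "P0 = matrix (proj (isotypic \<psi>))"
  have P0: "P0 *v v = proj (isotypic \<psi>) v" for v
    unfolding P0_def by (rule matrix_works[OF proj_linear[OF isotypic_csubspace]])
  have Q0: "Q P0"
    unfolding Q_def P0
  proof (intro conjI ballI impI)
    fix v assume "v \<in> isotypic \<psi>"
    then show "proj (isotypic \<psi>) v = v" by (rule proj_id[OF isotypic_csubspace])
  next
    fix \<phi> v assume "\<phi> \<in> module_types TT" "\<phi> \<noteq> \<psi>" "v \<in> isotypic \<phi>"
    then have "v \<in> orth (isotypic \<psi>)" using isotypic_orth psi by blast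
    then show "proj (isotypic \<psi>) v = 0" using proj_eq_0_iff[OF isotypic_csubspace] by blast
  qed
  have unique: "P = P0" if "Q P" for P
    using Q_irr[OF that] Q_irr[OF Q0] by (intro matrix_eq_on_irreducible) simp
  have "Q (type_proj TT \<psi>)"
    unfolding type_proj_def Q_def[symmetric] using Q0 unique by (rule theI)
  then show ?thesis using Q_irr[OF _ W] by blast
qed

text \<open>Nonzero vectors chosen in distinct types are mutually orthogonal, hence independent.\<close>
lemma finite_module_types: "finite (module_types TT)"
proof -
  define f where "f \<psi> = (SOME w. w \<in> \<Union>\<psi> \<and> w \<noteq> 0)" for \<psi> :: "'v cvec set set"
  have f: "f \<psi> \<in> isotypic \<psi> \<and> f \<psi> \<noteq> 0" if ps: "\<psi> \<in> module_types TT" for \<psi>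
  proof -
    obtain W where W: "W \<in> \<psi>" using module_types_nonempty[OF ps] by blast
    then have "irreducible_module TT W" using module_types_irreducible[OF ps] by blast
    then obtain w where "w \<in> W" "w \<noteq> 0"
      by (auto simp: irreducible_module_def is_module_def csubspace_def)
    then have "\<exists>w. w \<in> \<Union>\<psi> \<and> w \<noteq> 0" using W by blast
    then have "f \<psi> \<in> \<Union>\<psi> \<and> f \<psi> \<noteq> 0" unfolding f_def by (rule someI_ex)
    then show ?thesis using cspan_superset[of "\<Union>\<psi>"] unfolding isotypic_def by auto
  qed
  have orthf: "cinner (f \<psi>) (f \<phi>) = 0"
    if "\<psi> \<in> module_types TT" "\<phi> \<in> module_types TT" "\<psi> \<noteq> \<phi>" for \<psi> \<phi>
    using isotypic_orth[OF that] f that by (auto simp: orth_def)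
  have inj: "inj_on f (module_types TT)"
  proof
    fix \<psi> \<phi> assume a: "\<psi> \<in> module_types TT" "\<phi> \<in> module_types TT" "f \<psi> = f \<phi>"
    show "\<psi> = \<phi>"
    proof (rule ccontr)
      assume "\<psi> \<noteq> \<phi>"
      then have "cinner (f \<psi>) (f \<psi>) = 0" using orthf a by metis
      then show False using f a cinner_self_eq_0_imp by blast
    qed
  qed
  have "pairwise orthogonal (f ` module_types TT)"
    using orthf by (force simp: pairwise_def orthogonal_def inner_eq_Re_cinner)
  moreover have "0 \<notin> f ` module_types TT" using f by auto
  ultimately have "finite (f ` module_types TT)"
    by (intro independent_imp_finite pairwise_orthogonal_independent)
  then show ?thesis using finite_imageD inj by blast
qed

definition type_sum :: "('v cvec set set \<Rightarrow> complex) \<Rightarrow> 'v cmat" where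
  "type_sum \<alpha> = (\<Sum>\<psi>\<in>module_types TT. msc (\<alpha> \<psi>) (type_proj TT \<psi>))"

lemma type_sum_on_irreducible:
  assumes "irreducible_module TT W" "w \<in> W"
  shows "type_sum \<alpha> *v w = \<alpha> (iso_class TT W) *s w"
proof -
  have "type_sum \<alpha> *v w = (\<Sum>\<psi>\<in>module_types TT. \<alpha> \<psi> *s (type_proj TT \<psi> *v w))"
    by (simp add: type_sum_def sum_matrix_vector_mult msc_matrix_vector_mult)
  also have "\<dots> = (\<Sum>\<psi>\<in>module_types TT. if \<psi> = iso_class TT W then \<alpha> \<psi> *s w else 0)"
    using type_proj_on_irreducible assms by (intro sum.cong) auto
  also have "\<dots> = \<alpha> (iso_class TT W) *s w"
    using finite_module_types iso_class_in_module_types[OF assms(1)] by simp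
  finally show ?thesis .
qed

lemma type_sum_centralizer: "type_sum \<alpha> \<in> centralizer TT"
  unfolding centralizer_def
proof (intro CollectI ballI matrix_eq_on_irreducible)
  fix M W w assume "M \<in> TT" "irreducible_module TT W" "w \<in> W"
  then show "(type_sum \<alpha> ** M) *v w = (M ** type_sum \<alpha>) *v w"
    by (simp only: matrix_vector_mul_assoc[symmetric] type_sum_on_irreducible
        irreducible_module_closed matrix_vector_mult_smult)
qed

lemma type_sum_mult: "type_sum \<alpha> ** type_sum \<beta> = type_sum (\<lambda>\<psi>. \<alpha> \<psi> * \<beta> \<psi>)"
proof (rule matrix_eq_on_irreducible)
  fix W w assume "irreducible_module TT W" "w \<in> W"
  then show "(type_sum \<alpha> ** type_sum \<beta>) *v w = type_sum (\<lambda>\<psi>. \<alpha> \<psi> * \<beta> \<psi>) *v w"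
    by (simp only: matrix_vector_mul_assoc[symmetric] type_sum_on_irreducible
        matrix_vector_mult_smult vector_smult_assoc) (simp add: mult.commute)
qed

lemma type_sum_one: "type_sum (\<lambda>_. 1) = mat 1"
  by (rule matrix_eq_on_irreducible) (simp only: type_sum_on_irreducible matrix_vector_mul_lid vector_smult_lid)

lemma matrix_inv_type_sum:
  assumes "\<forall>\<psi>\<in>module_types TT. \<alpha> \<psi> \<noteq> 0"
  shows "matrix_inv (type_sum \<alpha>) = type_sum (\<lambda>\<psi>. inverse (\<alpha> \<psi>))"
proof -
  define B where "B = type_sum (\<lambda>\<psi>. inverse (\<alpha> \<psi>))"
  have "type_sum (\<lambda>\<psi>. \<alpha> \<psi> * inverse (\<alpha> \<psi>)) = type_sum (\<lambda>_. 1)"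
    "type_sum (\<lambda>\<psi>. inverse (\<alpha> \<psi>) * \<alpha> \<psi>) = type_sum (\<lambda>_. 1)"
    unfolding type_sum_def using assms by (auto intro!: sum.cong)
  then have AB: "type_sum \<alpha> ** B = mat 1" "B ** type_sum \<alpha> = mat 1"
    unfolding B_def type_sum_mult type_sum_one by simp_all
  define X where "X = matrix_inv (type_sum \<alpha>)"
  have X: "X ** type_sum \<alpha> = mat 1"
    unfolding X_def matrix_inv_def by (rule someI2[of _ B]) (use AB in simp_all)
  have "X = X ** (type_sum \<alpha> ** B)" using AB by simp
  also have "\<dots> = B" using X by (simp add: matrix_mul_assoc)
  finally show ?thesis by (simp add: X_def B_def)
qed

lemma type_sum_add_inv_centralizer:
  assumes "\<forall>\<psi>\<in>module_types TT. \<alpha> \<psi> \<noteq> 0"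
  shows "type_sum \<alpha> + matrix_inv (type_sum \<alpha>) \<in> centralizer TT"
  unfolding matrix_inv_type_sum[OF assms] by (intro centralizer_add type_sum_centralizer)

end

lemma Delta_q_module_if_centralizer:
  assumes "X \<in> TT" "Y \<in> TT" "Z \<in> TT"
    and "aw_elem q X Y Z \<in> centralizer TT" "aw_elem q Y Z X \<in> centralizer TT"
    and "aw_elem q Z X Y \<in> centralizer TT"
  shows "Delta_q_module q X Y Z"
  using assms by (simp add: Delta_q_module_def commutes_with_all_def centralizer_def)

lemma alg_gen_affine_gen1: "msc k (M - mat w) \<in> alg_gen M N"
  and alg_gen_affine_gen2: "msc k (N - mat w) \<in> alg_gen M N"
proof -
  have "P - mat w = P + msc (- w) (mat 1)" for P :: "'a::finite cmat"
    by (simp add: msc_def mat_def vec_eq_iff)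
  then show "msc k (M - mat w) \<in> alg_gen M N" "msc k (N - mat w) \<in> alg_gen M N"
    by (metis alg_gen.intros)+
qed

theorem theorem5p15:
  fixes adj :: "'v::finite \<Rightarrow> 'v \<Rightarrow> bool"
    and x :: 'v
    and E :: "nat \<Rightarrow> 'v cmat"
    and q w u v ws us vs a b :: complex
    and c :: "'v cvec set set \<Rightarrow> complex"
    and C :: "'v cmat"
  assumes drg: "distance_regular adj"
    and diam: "diameter adj \<ge> 3"
    and idem: "primitive_idempotents adj E"
    and qpoly: "Q_polynomial adj E"
    and q_nz: "q \<noteq> 0" and q4: "q ^ 4 \<noteq> 1"
    and eig: "adjmat adj = (\<Sum>i\<le>diameter adj. msc (qracah_ev q (diameter adj) w u v i) (E i))"
    and dual_eig: "dual_adj x E =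
                     (\<Sum>i\<le>diameter adj. msc (qracah_ev q (diameter adj) ws us vs i) (dual_idem adj x i))"
    and nz: "u \<noteq> 0" "us \<noteq> 0" "v \<noteq> 0" "vs \<noteq> 0"
    and a_def: "a\<^sup>2 = u / v" and b_def: "b\<^sup>2 = us / vs"
    and all_thin: "\<forall>W. irreducible_module (terwilliger adj x E) W \<longrightarrow> thin adj x W"
    and c_root: "\<forall>\<psi>\<in>module_types (terwilliger adj x E).
                   (c \<psi>)\<^sup>2 - kappaW adj x E q a b w v (type_rep \<psi>) * c \<psi> + 1 = 0"
    and C_in: "C \<in> terwilliger adj x E"
    and eqA: "aw_elem q (boldA adj w a v) (boldB x E ws b vs) C =
      msc (1 / (q + inverse q))
        ((bold_a adj x E q a + matrix_inv (bold_a adj x E q a)) **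
           (bold_Lambda adj x E q + matrix_inv (bold_Lambda adj x E q)) +
         (bold_b adj x E q b + matrix_inv (bold_b adj x E q b)) **
           (bold_c adj x E c + matrix_inv (bold_c adj x E c)))"
    and eqB: "aw_elem q (boldB x E ws b vs) C (boldA adj w a v) =
      msc (1 / (q + inverse q))
        ((bold_b adj x E q b + matrix_inv (bold_b adj x E q b)) **
           (bold_Lambda adj x E q + matrix_inv (bold_Lambda adj x E q)) +
         (bold_c adj x E c + matrix_inv (bold_c adj x E c)) **
           (bold_a adj x E q a + matrix_inv (bold_a adj x E q a)))"
    and eqC: "aw_elem q C (boldA adj w a v) (boldB x E ws b vs) =
      msc (1 / (q + inverse q))
        ((bold_c adj x E c + matrix_inv (bold_c adj x E c)) **
           (bold_Lambda adj x E q + matrix_inv (bold_Lambda adj x E q)) +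
         (bold_a adj x E q a + matrix_inv (bold_a adj x E q a)) **
           (bold_b adj x E q b + matrix_inv (bold_b adj x E q b)))"
  shows "Delta_q_module q (boldA adj w a v) (boldB x E ws b vs) C"
proof -
  define TT where "TT = terwilliger adj x E"
  interpret ctrans_closed TT
    using terwilliger_ctrans_closed[OF drg idem] diam by unfold_locales (simp add: TT_def)
  have a0: "a \<noteq> 0" and b0: "b \<noteq> 0" using a_def b_def nz by auto
  have c0: "\<forall>\<psi>\<in>module_types TT. c \<psi> \<noteq> 0" using c_root by (auto simp: TT_def)
  have "bold_a adj x E q a = type_sum (\<lambda>\<psi>. aW adj x E q a (type_rep \<psi>))"
    "bold_b adj x E q b = type_sum (\<lambda>\<psi>. bW adj x q b (type_rep \<psi>))"
    "bold_c adj x E c = type_sum c"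
    "bold_Lambda adj x E q = type_sum (\<lambda>\<psi>. q ^ (mod_diameter adj x (type_rep \<psi>) + 1))"
    by (simp_all add: bold_a_def bold_b_def bold_c_def bold_Lambda_def type_sum_def Let_def
        flip: TT_def)
  then have "bold_a adj x E q a + matrix_inv (bold_a adj x E q a) \<in> centralizer TT"
    "bold_b adj x E q b + matrix_inv (bold_b adj x E q b) \<in> centralizer TT"
    "bold_c adj x E c + matrix_inv (bold_c adj x E c) \<in> centralizer TT"
    "bold_Lambda adj x E q + matrix_inv (bold_Lambda adj x E q) \<in> centralizer TT"
    using c0 by (simp_all add: type_sum_add_inv_centralizer aW_def bW_def a0 b0 q_nz)
  then have "aw_elem q (boldA adj w a v) (boldB x E ws b vs) C \<in> centralizer TT"
    "aw_elem q (boldB x E ws b vs) C (boldA adj w a v) \<in> centralizer TT"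
    "aw_elem q C (boldA adj w a v) (boldB x E ws b vs) \<in> centralizer TT"
    unfolding eqA eqB eqC by (auto intro!: centralizer_msc centralizer_add centralizer_mult)
  moreover have "boldA adj w a v \<in> TT" "boldB x E ws b vs \<in> TT" "C \<in> TT"
    using C_in alg_gen_affine_gen1 alg_gen_affine_gen2
    by (simp_all add: TT_def terwilliger_def boldA_def boldB_def)
  ultimately show ?thesis using Delta_q_module_if_centralizer by blast
qed

end
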